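(* Let $K_1,K_2$ be finite simplicial complexes on disjoint vertex sets, $k\ge 2$, and $K=K_1\vee_kK_2$ a $k$-wedge sum. If $0\le i\le k-2$, then $B_i(K)$ is unbalanced.
   Context: $S_j(K)$ is the set of faces of cardinality $j+1$. The $k$-wedge sum $K_1\vee_kK_2$ is obtained from $K_1\cup K_2$ by identifying a $k$-face $\{v_0,\dots,v_k\}$ of $K_1$ with a $k$-face $\{u_0,\dots,u_k\}$ of $K_2$ via $v_j\mapsto u_j$. For an oriented complex $K$, $B_i(K)$ is the signed bipartite graph on $S_i(K)\cup S_{i+1}(K)$ with edges $\{G,\bar G\}$ for $G\subset\bar G$, signed by the boundary incidence sign $\mathrm{sgn}([G],\partial[\bar G])\in\{\pm1\}$ ($(-1)^j$ if $G$ is $\bar G$ minus its $j$-th vertex with agreeing orientation, negated otherwise). A signed graph is balanced if every cycle has positive sign product. *)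

theory Defs
  imports Main
begin

definition simplicial_complex :: "'a set set \<Rightarrow> bool" where
  "simplicial_complex K \<longleftrightarrow> finite K \<and> (\<forall>F\<in>K. finite F) \<and> (\<forall>F\<in>K. \<forall>G. G \<subseteq> F \<longrightarrow> G \<in> K)"

definition vertices :: "'a set set \<Rightarrow> 'a set" where
  "vertices K = \<Union>K"

definition faces_dim :: "nat \<Rightarrow> 'a set set \<Rightarrow> 'a set set" where
  "faces_dim j K = {F \<in> K. card F = j + 1}"

(* k-wedge sum: identify the k-face s1 of K1 with the k-face s2 of K2 via the bijection f
   (v_j \<mapsto> u_j); the quotient map sends v \<in> s1 to f v and fixes all other vertices. *)
definition wedge_map :: "'a set \<Rightarrow> ('a \<Rightarrow> 'a) \<Rightarrow> 'a \<Rightarrow> 'a" where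
  "wedge_map s1 f v = (if v \<in> s1 then f v else v)"

definition wedge_sum :: "'a set set \<Rightarrow> 'a set set \<Rightarrow> 'a set \<Rightarrow> 'a set \<Rightarrow> ('a \<Rightarrow> 'a) \<Rightarrow> 'a set set" where
  "wedge_sum K1 K2 s1 s2 f = ((\<lambda>F. wedge_map s1 f ` F) ` K1) \<union> K2"

definition is_k_wedge_sum :: "nat \<Rightarrow> 'a set set \<Rightarrow> 'a set set \<Rightarrow> 'a set set \<Rightarrow> bool" where
  "is_k_wedge_sum k K1 K2 K \<longleftrightarrow>
     (\<exists>s1 s2 f. s1 \<in> K1 \<and> card s1 = k + 1 \<and> s2 \<in> K2 \<and> card s2 = k + 1 \<and>
        bij_betw f s1 s2 \<and> K = wedge_sum K1 K2 s1 s2 f)"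

(* An orientation of K: each face gets an ordering of its vertices (representative of its
   orientation class). *)
definition orientation :: "'a set set \<Rightarrow> ('a set \<Rightarrow> 'a list) \<Rightarrow> bool" where
  "orientation K ori \<longleftrightarrow> (\<forall>F\<in>K. distinct (ori F) \<and> set (ori F) = F)"

definition before :: "'a list \<Rightarrow> 'a \<Rightarrow> 'a \<Rightarrow> bool" where
  "before xs a b \<longleftrightarrow> (\<exists>i j. i < j \<and> j < length xs \<and> xs ! i = a \<and> xs ! j = b)"

(* sign of the permutation taking ordering xs to ordering ys (same elements):
   +1 iff they define the same orientation *)
definition rel_sign :: "'a list \<Rightarrow> 'a list \<Rightarrow> int" where
  "rel_sign xs ys = (-1) ^ card {(a, b). a \<in> set xs \<and> b \<in> set xs \<and> before xs a b \<and> before ys b a}"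

(* sgn([G], \<partial>[H]) for G \<subset> H, |H| = |G|+1: H oriented as ori H, G = H minus its j-th vertex;
   (-1)^j if the induced ordering agrees with the orientation of G, negated otherwise *)
definition incidence_sign :: "('a set \<Rightarrow> 'a list) \<Rightarrow> 'a set \<Rightarrow> 'a set \<Rightarrow> int" where
  "incidence_sign ori G H =
     (let L = ori H; v = the_elem (H - G); j = (THE j. j < length L \<and> L ! j = v)
      in (-1) ^ j * rel_sign (remove1 v L) (ori G))"

definition is_cycle :: "'v set \<Rightarrow> ('v \<Rightarrow> 'v \<Rightarrow> bool) \<Rightarrow> 'v list \<Rightarrow> bool" where
  "is_cycle V E c \<longleftrightarrow> length c \<ge> 3 \<and> distinct c \<and> set c \<subseteq> V \<and>
     (\<forall>i < length c. E (c ! i) (c ! ((i + 1) mod length c)))"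

definition balanced :: "'v set \<Rightarrow> ('v \<Rightarrow> 'v \<Rightarrow> bool) \<Rightarrow> ('v \<Rightarrow> 'v \<Rightarrow> int) \<Rightarrow> bool" where
  "balanced V E s \<longleftrightarrow> (\<forall>c. is_cycle V E c \<longrightarrow>
     (\<Prod>i < length c. s (c ! i) (c ! ((i + 1) mod length c))) = 1)"

definition B_vertices :: "nat \<Rightarrow> 'a set set \<Rightarrow> 'a set set" where
  "B_vertices i K = faces_dim i K \<union> faces_dim (Suc i) K"

definition B_adj :: "nat \<Rightarrow> 'a set set \<Rightarrow> 'a set \<Rightarrow> 'a set \<Rightarrow> bool" where
  "B_adj i K X Y \<longleftrightarrow>
     (X \<in> faces_dim i K \<and> Y \<in> faces_dim (Suc i) K \<and> X \<subset> Y) \<or>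
     (Y \<in> faces_dim i K \<and> X \<in> faces_dim (Suc i) K \<and> Y \<subset> X)"

definition B_sign :: "('a set \<Rightarrow> 'a list) \<Rightarrow> 'a set \<Rightarrow> 'a set \<Rightarrow> int" where
  "B_sign ori X Y = (if X \<subset> Y then incidence_sign ori X Y else incidence_sign ori Y X)"

definition B_balanced :: "nat \<Rightarrow> 'a set set \<Rightarrow> ('a set \<Rightarrow> 'a list) \<Rightarrow> bool" where
  "B_balanced i K ori \<longleftrightarrow> balanced (B_vertices i K) (B_adj i K) (B_sign ori)"

end

theory Submission
  imports Defs
begin

text \<open>The identified face \<open>s\<close> of a \<open>k\<close>-wedge sum is a \<open>k\<close>-simplex all of whose faces
lie in \<open>K\<close>. For \<open>i \<le> k - 2\<close> it has
\<open>i + 3\<close> distinct vertices \<open>a, b, c\<close> and \<open>R\<close> (\<open>|R| = i\<close>). Writing \<open>Rx\<close> for \<open>R \<union> {x}\<close>, the faces \<open>Rc \<subset> Rbc \<supset> Rb \<subset> Rab \<supset> Ra \<subset> Rac \<supset> Rc\<close> form a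
hexagon in \<open>B_i(K)\<close>. Comparing every orientation with a fixed ordering of its face, each of
the six faces enters the sign product twice, so the orientations cancel; what remains is one
transposition for each \<open>(i+1)\<close>-face, i.e. the sign \<open>(-1)^3 = -1\<close>.\<close>

section \<open>Order of elements in a list\<close>

lemma before_Nil [simp]: "\<not> before [] a b"
  by (simp add: before_def)

lemma before_Cons: "before (x#xs) a b \<longleftrightarrow> (a = x \<and> b \<in> set xs) \<or> before xs a b"
proof
  assume "before (x#xs) a b"
  then obtain i j where ij: "i < j" "j < Suc (length xs)" "(x#xs)!i = a" "(x#xs)!j = b"
    by (auto simp: before_def)
  then obtain j' where j': "j = Suc j'" by (cases j) auto
  show "(a = x \<and> b \<in> set xs) \<or> before xs a b"
  proof (cases i)
    case 0 then show ?thesis using ij j' by auto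
  next
    case (Suc i') then show ?thesis using ij j' unfolding before_def
      by (intro disjI2 exI[of _ i'] exI[of _ j']) auto
  qed
next
  assume "(a = x \<and> b \<in> set xs) \<or> before xs a b"
  then show "before (x#xs) a b"
  proof
    assume "a = x \<and> b \<in> set xs"
    then obtain j where "j < length xs" "xs!j = b" "a = x" by (auto simp: in_set_conv_nth)
    then show ?thesis unfolding before_def by (intro exI[of _ 0] exI[of _ "Suc j"]) auto
  next
    assume "before xs a b"
    then obtain i j where "i < j" "j < length xs" "xs!i = a" "xs!j = b" by (auto simp: before_def)
    then show ?thesis unfolding before_def by (intro exI[of _ "Suc i"] exI[of _ "Suc j"]) auto
  qed
qed

lemma before_in_set: "before xs a b \<Longrightarrow> a \<in> set xs \<and> b \<in> set xs"
  by (induction xs) (auto simp: before_Cons)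

lemma before_asym: "distinct xs \<Longrightarrow> before xs a b \<Longrightarrow> \<not> before xs b a"
  by (induction xs) (auto simp: before_Cons dest: before_in_set)

lemma before_irrefl: "distinct xs \<Longrightarrow> \<not> before xs a a"
  using before_asym by fastforce

lemma before_total:
  "distinct xs \<Longrightarrow> a \<in> set xs \<Longrightarrow> b \<in> set xs \<Longrightarrow> a \<noteq> b \<Longrightarrow> before xs a b \<or> before xs b a"
  by (induction xs) (auto simp: before_Cons)

lemma before_remove1: "before (remove1 v xs) a b \<Longrightarrow> before xs a b"
  by (induction xs) (auto simp: before_Cons split: if_splits dest: set_mp[OF set_remove1_subset])

lemma before_nth_iff_in_take:
  assumes "distinct L" "j < length L"
  shows "before L a (L!j) \<longleftrightarrow> a \<in> set (take j L)"
proof -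
  have "before L a (L!j) \<longleftrightarrow> (\<exists>i<j. L!i = a)"
    using assms nth_eq_iff_index_eq[OF assms(1)] unfolding before_def
    by metis
  also have "\<dots> \<longleftrightarrow> a \<in> set (take j L)"
    using assms(2) by (auto simp: in_set_conv_nth)
  finally show ?thesis .
qed

section \<open>Relative signs of orderings\<close>

definition ordered_pairs :: "'a list \<Rightarrow> ('a \<times> 'a) set" where
  "ordered_pairs xs = {(a, b). before xs a b}"

definition pair_sign :: "'a list \<Rightarrow> 'a \<times> 'a \<Rightarrow> int" where
  "pair_sign ys p = (if before ys (fst p) (snd p) then 1 else -1)"

lemma finite_ordered_pairs: "finite (ordered_pairs xs)"
  by (rule finite_subset[of _ "set xs \<times> set xs"]) (auto simp: ordered_pairs_def dest: before_in_set)

lemma rel_sign_eq_prod_pair_sign: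
  assumes "distinct xs" "distinct ys" "set xs = set ys"
  shows "rel_sign xs ys = (\<Prod>p\<in>ordered_pairs xs. pair_sign ys p)"
proof -
  let ?inv = "{p \<in> ordered_pairs xs. before ys (snd p) (fst p)}"
  have "(\<Prod>p\<in>ordered_pairs xs. pair_sign ys p) = (\<Prod>p\<in>ordered_pairs xs. if p \<in> ?inv then -1 else 1)"
  proof (rule prod.cong[OF refl])
    fix p assume "p \<in> ordered_pairs xs"
    then obtain a b where p: "p = (a,b)" "before xs a b" by (auto simp: ordered_pairs_def)
    then have "a \<noteq> b" "a \<in> set ys" "b \<in> set ys" using assms before_irrefl before_in_set by metis+
    then show "pair_sign ys p = (if p \<in> ?inv then -1 else 1)"
      using p assms before_total[of ys a b] before_asym[of ys a b]
      by (auto simp: pair_sign_def ordered_pairs_def)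
  qed
  also have "\<dots> = (-1) ^ card ?inv"
    by (simp add: prod.If_cases finite_ordered_pairs Int_def conj_commute)
  also have "?inv = {(a, b). a \<in> set xs \<and> b \<in> set xs \<and> before xs a b \<and> before ys b a}"
    by (auto simp: ordered_pairs_def dest: before_in_set)
  finally show ?thesis by (simp add: rel_sign_def)
qed

lemma bij_betw_reorient_pairs:
  assumes "distinct xs" "distinct ys" "set xs = set ys"
  shows "bij_betw (\<lambda>p. if before ys (fst p) (snd p) then p else prod.swap p)
           (ordered_pairs xs) (ordered_pairs ys)"
    (is "bij_betw ?h _ _")
proof (rule bij_betw_imageI)
  show "inj_on ?h (ordered_pairs xs)"
    using before_asym[OF assms(1)]
    by (intro inj_onI) (auto simp: ordered_pairs_def split: if_splits)
  have total: "before ys a b \<or> before ys b a" if "before xs a b" for a b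
    using that assms before_total[OF assms(2)] before_irrefl[OF assms(1)] before_in_set by metis
  have total': "before xs a b \<or> before xs b a" if "before ys a b" for a b
    using that assms before_total[OF assms(1)] before_irrefl[OF assms(2)] before_in_set by metis
  show "?h ` ordered_pairs xs = ordered_pairs ys"
  proof
    show "?h ` ordered_pairs xs \<subseteq> ordered_pairs ys"
      using total by (fastforce simp: ordered_pairs_def)
    show "ordered_pairs ys \<subseteq> ?h ` ordered_pairs xs"
    proof
      fix q assume "q \<in> ordered_pairs ys"
      then obtain a b where ab: "before ys a b" "q = (a,b)" by (auto simp: ordered_pairs_def)
      then consider "before xs a b" | "before xs b a" using total' by blast
      then show "q \<in> ?h ` ordered_pairs xs"
      proof cases
        case 1 then show ?thesis
          using ab by (auto simp: ordered_pairs_def intro!: image_eqI[of _ _ "(a,b)"])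
      next
        case 2 then show ?thesis using ab before_asym[OF assms(2)]
          by (auto simp: ordered_pairs_def intro!: image_eqI[of _ _ "(b,a)"])
      qed
    qed
  qed
qed

lemma prod_ordered_pairs_reindex:
  assumes "distinct xs" "distinct ys" "set xs = set ys"
    and symmetric: "\<And>a b. a \<in> set xs \<Longrightarrow> b \<in> set xs \<Longrightarrow> g (a,b) = g (b,a)"
  shows "prod g (ordered_pairs xs) = prod g (ordered_pairs ys)"
proof -
  let ?h = "\<lambda>p. if before ys (fst p) (snd p) then p else prod.swap p"
  have "prod g (ordered_pairs ys) = (\<Prod>p\<in>ordered_pairs xs. g (?h p))"
    using prod.reindex_bij_betw[OF bij_betw_reorient_pairs[OF assms(1-3)], of g] by simp
  also have "\<dots> = prod g (ordered_pairs xs)"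
    using symmetric by (intro prod.cong) (auto simp: ordered_pairs_def dest: before_in_set)
  finally show ?thesis by simp
qed

lemma rel_sign_trans:
  assumes "distinct xs" "distinct ys" "distinct zs" "set xs = set ys" "set ys = set zs"
  shows "rel_sign xs zs = rel_sign xs ys * rel_sign ys zs"
proof -
  let ?g = "\<lambda>p. pair_sign ys p * pair_sign zs p"
  have "rel_sign xs zs = (\<Prod>p\<in>ordered_pairs xs. pair_sign zs p)"
    using assms by (simp add: rel_sign_eq_prod_pair_sign)
  also have "\<dots> = (\<Prod>p\<in>ordered_pairs xs. pair_sign ys p * ?g p)"
    by (intro prod.cong) (simp_all add: pair_sign_def)
  also have "\<dots> = rel_sign xs ys * (\<Prod>p\<in>ordered_pairs xs. ?g p)"
    using assms by (simp add: prod.distrib rel_sign_eq_prod_pair_sign)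
  also have "(\<Prod>p\<in>ordered_pairs xs. ?g p) = (\<Prod>p\<in>ordered_pairs ys. ?g p)"
  proof (rule prod_ordered_pairs_reindex)
    fix a b assume "a \<in> set xs" "b \<in> set xs"
    then show "?g (a, b) = ?g (b, a)"
      using assms before_total[of ys a b] before_asym[of ys a b]
        before_total[of zs a b] before_asym[of zs a b]
      by (cases "a = b") (auto simp: pair_sign_def)
  qed (use assms in auto)
  also have "\<dots> = rel_sign ys zs"
    using assms by (auto simp: rel_sign_eq_prod_pair_sign ordered_pairs_def pair_sign_def
        intro!: prod.cong)
  finally show ?thesis .
qed

lemma rel_sign_refl:
  assumes "distinct xs"
  shows "rel_sign xs xs = 1"
proof -
  have "{(a, b). a \<in> set xs \<and> b \<in> set xs \<and> before xs a b \<and> before xs b a} = {}"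
    using before_asym[OF assms] by blast
  then show ?thesis unfolding rel_sign_def by (simp only: card.empty power_0)
qed

lemma rel_sign_square: "rel_sign xs ys * rel_sign xs ys = 1"
  by (simp add: rel_sign_def flip: power_add)

lemma rel_sign_Cons:
  assumes "v \<notin> set xs" "v \<notin> set ys"
  shows "rel_sign (v#xs) (v#ys) = rel_sign xs ys"
proof -
  have "{(a, b). a \<in> set (v#xs) \<and> b \<in> set (v#xs) \<and> before (v#xs) a b \<and> before (v#ys) b a}
      = {(a, b). a \<in> set xs \<and> b \<in> set xs \<and> before xs a b \<and> before ys b a}"
    using assms by (auto simp: before_Cons dest: before_in_set)
  then show ?thesis unfolding rel_sign_def by (simp only:)
qed

lemma rel_sign_swap:
  assumes "distinct (x#y#R)"
  shows "rel_sign (x#y#R) (y#x#R) = -1"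
proof -
  have "{(a, b). a \<in> set (x#y#R) \<and> b \<in> set (x#y#R) \<and> before (x#y#R) a b \<and> before (y#x#R) b a}
      = {(x,y)}"
    using assms before_asym[of R] by (auto simp: before_Cons dest: before_in_set)
  then show ?thesis unfolding rel_sign_def by simp
qed

lemma rel_sign_move_to_front:
  assumes "distinct L" "j < length L" "L!j = v"
  shows "rel_sign L (v # remove1 v L) = (-1)^j"
proof -
  have "{(a, b). a \<in> set L \<and> b \<in> set L \<and> before L a b \<and> before (v # remove1 v L) b a}
     = (\<lambda>a. (a,v)) ` {a. before L a v}"
    using assms before_asym[OF assms(1)] before_irrefl[OF assms(1)]
    by (auto simp: before_Cons dest: before_remove1 before_in_set)
  also have "{a. before L a v} = set (take j L)"
    using before_nth_iff_in_take[OF assms(1,2)] assms(3) by auto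
  finally have "{(a, b). a \<in> set L \<and> b \<in> set L \<and> before L a b \<and> before (v # remove1 v L) b a}
     = (\<lambda>a. (a,v)) ` set (take j L)" .
  moreover have "card ((\<lambda>a. (a,v)) ` set (take j L)) = j"
    using assms by (simp add: card_image inj_on_def distinct_card)
  ultimately show ?thesis unfolding rel_sign_def by (simp only:)
qed

section \<open>Incidence signs\<close>

lemma incidence_sign_eq_rel_sign:
  assumes "v \<notin> G" "H = insert v G"
    and oH: "distinct (ori H)" "set (ori H) = H" and oG: "distinct (ori G)" "set (ori G) = G"
  shows "incidence_sign ori G H = rel_sign (ori H) (v # ori G)"
proof -
  have HG: "H - G = {v}" using assms(1,2) by auto
  obtain j where j: "j < length (ori H)" "ori H ! j = v"
    using assms(2) oH(2) by (metis in_set_conv_nth insertI1)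
  have index: "(THE j. j < length (ori H) \<and> ori H ! j = v) = j"
    by (rule the_equality) (use j nth_eq_iff_index_eq[OF oH(1)] in auto)
  have incidence: "incidence_sign ori G H = (-1)^j * rel_sign (remove1 v (ori H)) (ori G)"
    unfolding incidence_sign_def Let_def HG the_elem_eq index ..
  have rest: "distinct (remove1 v (ori H))" "set (remove1 v (ori H)) = G"
    using oH assms(1,2) by auto
  have "rel_sign (ori H) (v # ori G)
      = rel_sign (ori H) (v # remove1 v (ori H)) * rel_sign (v # remove1 v (ori H)) (v # ori G)"
    by (rule rel_sign_trans) (use oH oG rest assms(1,2) in auto)
  also have "\<dots> = (-1)^j * rel_sign (remove1 v (ori H)) (ori G)"
    using rel_sign_move_to_front[OF oH(1) j] rel_sign_Cons[of v "remove1 v (ori H)" "ori G"]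
      rest(2) oG(2) assms(1) by simp
  finally show ?thesis using incidence by simp
qed

lemma incidence_sign_via_reference:
  assumes d: "distinct (v#RG)" "distinct RH" "set RH = set (v#RG)"
    and oH: "distinct (ori (set RH))" "set (ori (set RH)) = set RH"
    and oG: "distinct (ori (set RG))" "set (ori (set RG)) = set RG"
  shows "incidence_sign ori (set RG) (set RH)
    = rel_sign (ori (set RH)) RH * rel_sign RH (v#RG) * rel_sign RG (ori (set RG))"
proof -
  have "incidence_sign ori (set RG) (set RH) = rel_sign (ori (set RH)) (v # ori (set RG))"
    by (rule incidence_sign_eq_rel_sign) (use d oH oG in auto)
  also have "\<dots> = rel_sign (ori (set RH)) RH * rel_sign RH (v # ori (set RG))"
    by (rule rel_sign_trans) (use d oH oG in auto)
  also have "rel_sign RH (v # ori (set RG)) = rel_sign RH (v#RG) * rel_sign (v#RG) (v # ori (set RG))"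
    by (rule rel_sign_trans) (use d oG in auto)
  also have "rel_sign (v#RG) (v # ori (set RG)) = rel_sign RG (ori (set RG))"
    by (rule rel_sign_Cons) (use d oG in auto)
  finally show ?thesis by (simp only: mult.assoc)
qed

section \<open>The hexagon\<close>

definition hexagon :: "'a \<Rightarrow> 'a \<Rightarrow> 'a \<Rightarrow> 'a list \<Rightarrow> 'a set list" where
  "hexagon a b c R = [set (c#R), set (b#c#R), set (b#R), set (a#b#R), set (a#R), set (a#c#R)]"

lemma less_6_cases: "(j::nat) < 6 \<Longrightarrow> j = 0 \<or> j = 1 \<or> j = 2 \<or> j = 3 \<or> j = 4 \<or> j = 5"
  by linarith

lemma B_adj_insert:
  assumes "X \<in> K" "H \<in> K" "H = insert v X" "v \<notin> X" "finite X" "card X = i + 1"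
  shows "B_adj i K X H" "B_adj i K H X"
  using assms by (auto simp: B_adj_def faces_dim_def)

lemma hexagon_is_cycle:
  assumes "distinct (a#b#c#R)" "length R = i" "set (hexagon a b c R) \<subseteq> K"
  shows "is_cycle (B_vertices i K) (B_adj i K) (hexagon a b c R)"
proof -
  have card: "card (set R) = i"
    using assms(1,2) by (simp add: distinct_card)
  have inK: "set (c#R) \<in> K" "set (b#R) \<in> K" "set (a#R) \<in> K"
    "set (b#c#R) \<in> K" "set (a#b#R) \<in> K" "set (a#c#R) \<in> K"
    using assms(3) by (auto simp: hexagon_def)
  note facts = inK card assms(1)
  have "B_adj i K (set (c#R)) (set (b#c#R))"
    by (rule B_adj_insert(1)[where v = b]) (use facts in auto)
  moreover have "B_adj i K (set (b#c#R)) (set (b#R))"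
    by (rule B_adj_insert(2)[where v = c]) (use facts in auto)
  moreover have "B_adj i K (set (b#R)) (set (a#b#R))"
    by (rule B_adj_insert(1)[where v = a]) (use facts in auto)
  moreover have "B_adj i K (set (a#b#R)) (set (a#R))"
    by (rule B_adj_insert(2)[where v = b]) (use facts in auto)
  moreover have "B_adj i K (set (a#R)) (set (a#c#R))"
    by (rule B_adj_insert(1)[where v = c]) (use facts in auto)
  moreover have "B_adj i K (set (a#c#R)) (set (c#R))"
    by (rule B_adj_insert(2)[where v = a]) (use facts in auto)
  ultimately have step: "B_adj i K (hexagon a b c R ! j) (hexagon a b c R ! ((j + 1) mod 6))"
    if "j < 6" for j
    using less_6_cases[OF that] unfolding hexagon_def by (elim disjE) simp_all
  have len: "length (hexagon a b c R) = 6" by (simp add: hexagon_def)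
  have "set (hexagon a b c R) \<subseteq> B_vertices i K"
    using inK card assms(1) by (auto simp: hexagon_def B_vertices_def faces_dim_def)
  moreover have "distinct (hexagon a b c R)"
  proof -
    have "distinct (map (\<lambda>F. (a \<in> F, b \<in> F, c \<in> F)) (hexagon a b c R))"
      using assms(1) by (auto simp: hexagon_def)
    then show ?thesis by (simp add: distinct_map)
  qed
  ultimately show ?thesis
    using step unfolding is_cycle_def len by simp
qed

lemma prod_cycle_6:
  "(\<Prod>j<length [x0, x1, x2, x3, x4, x5]. f ([x0, x1, x2, x3, x4, x5] ! j)
       ([x0, x1, x2, x3, x4, x5] ! ((j + 1) mod length [x0, x1, x2, x3, x4, x5])))
   = f x0 x1 * f x1 x2 * f x2 x3 * f x3 x4 * f x4 x5 * (f x5 x0 :: 'b :: comm_monoid_mult)"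
proof -
  have "{..<length [x0, x1, x2, x3, x4, x5]} = {0, 1, 2, 3, 4, 5}" by auto
  then show ?thesis by (simp add: mult_ac)
qed

lemma set_psubset_Cons: "v \<notin> set xs \<Longrightarrow> set xs \<subset> set (v # xs)"
  by auto

lemma set_psubset_Cons_Cons: "v \<notin> set (x # xs) \<Longrightarrow> set (x # xs) \<subset> set (x # v # xs)"
  unfolding psubset_eq by auto

lemma B_sign_psubset:
  "X \<subset> Y \<Longrightarrow> B_sign ori X Y = incidence_sign ori X Y"
  "Y \<subset> X \<Longrightarrow> B_sign ori X Y = incidence_sign ori Y X"
  by (auto simp: B_sign_def)

lemma hexagon_cycle_sign_eq_incidence_signs:
  assumes "distinct (a#b#c#R)"
  shows "(\<Prod>j<length (hexagon a b c R). B_sign ori (hexagon a b c R ! j)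
           (hexagon a b c R ! ((j + 1) mod length (hexagon a b c R))))
    = incidence_sign ori (set (c#R)) (set (b#c#R)) * incidence_sign ori (set (b#R)) (set (b#c#R))
      * incidence_sign ori (set (b#R)) (set (a#b#R)) * incidence_sign ori (set (a#R)) (set (a#b#R))
      * incidence_sign ori (set (a#R)) (set (a#c#R)) * incidence_sign ori (set (c#R)) (set (a#c#R))"
proof -
  have "set (c#R) \<subset> set (b#c#R)" by (rule set_psubset_Cons) (use assms in auto)
  moreover have "set (b#R) \<subset> set (b#c#R)" by (rule set_psubset_Cons_Cons) (use assms in auto)
  moreover have "set (b#R) \<subset> set (a#b#R)" by (rule set_psubset_Cons) (use assms in auto)
  moreover have "set (a#R) \<subset> set (a#b#R)" by (rule set_psubset_Cons_Cons) (use assms in auto)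
  moreover have "set (a#R) \<subset> set (a#c#R)" by (rule set_psubset_Cons_Cons) (use assms in auto)
  moreover have "set (c#R) \<subset> set (a#c#R)" by (rule set_psubset_Cons) (use assms in auto)
  ultimately show ?thesis
    unfolding hexagon_def prod_cycle_6 by (simp only: B_sign_psubset)
qed

lemma hexagon_sign:
  assumes "distinct (a#b#c#R)"
    and ori: "\<And>F. F \<in> set (hexagon a b c R) \<Longrightarrow> distinct (ori F) \<and> set (ori F) = F"
  shows "(\<Prod>j<length (hexagon a b c R). B_sign ori (hexagon a b c R ! j)
           (hexagon a b c R ! ((j + 1) mod length (hexagon a b c R)))) = -1"
proof -
  define xa where "xa = rel_sign (ori (set (b#c#R))) (b#c#R)"
  define xb where "xb = rel_sign (ori (set (a#c#R))) (a#c#R)"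
  define xc where "xc = rel_sign (ori (set (a#b#R))) (a#b#R)"
  define yab where "yab = rel_sign (c#R) (ori (set (c#R)))"
  define yac where "yac = rel_sign (b#R) (ori (set (b#R)))"
  define ybc where "ybc = rel_sign (a#R) (ori (set (a#R)))"
  have facts: "distinct (a#b#c#R)" "distinct (ori F)" "set (ori F) = F"
    if "F \<in> set (hexagon a b c R)" for F
    using assms that by auto
  note via = incidence_sign_via_reference[where ori = ori]
  have "incidence_sign ori (set (c#R)) (set (b#c#R)) = xa * rel_sign (b#c#R) (b#c#R) * yab"
    unfolding xa_def yab_def by (rule via) (use facts in \<open>auto simp: hexagon_def\<close>)
  moreover have "incidence_sign ori (set (b#R)) (set (b#c#R)) = xa * rel_sign (b#c#R) (c#b#R) * yac"
    unfolding xa_def yac_def by (rule via) (use facts in \<open>auto simp: hexagon_def\<close>)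
  moreover have "incidence_sign ori (set (b#R)) (set (a#b#R)) = xc * rel_sign (a#b#R) (a#b#R) * yac"
    unfolding xc_def yac_def by (rule via) (use facts in \<open>auto simp: hexagon_def\<close>)
  moreover have "incidence_sign ori (set (a#R)) (set (a#b#R)) = xc * rel_sign (a#b#R) (b#a#R) * ybc"
    unfolding xc_def ybc_def by (rule via) (use facts in \<open>auto simp: hexagon_def\<close>)
  moreover have "incidence_sign ori (set (a#R)) (set (a#c#R)) = xb * rel_sign (a#c#R) (c#a#R) * ybc"
    unfolding xb_def ybc_def by (rule via) (use facts in \<open>auto simp: hexagon_def\<close>)
  moreover have "incidence_sign ori (set (c#R)) (set (a#c#R)) = xb * rel_sign (a#c#R) (a#c#R) * yab"
    unfolding xb_def yab_def by (rule via) (use facts in \<open>auto simp: hexagon_def\<close>)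
  ultimately have "(\<Prod>j<length (hexagon a b c R). B_sign ori (hexagon a b c R ! j)
           (hexagon a b c R ! ((j + 1) mod length (hexagon a b c R))))
      = xa * rel_sign (b#c#R) (b#c#R) * yab * (xa * rel_sign (b#c#R) (c#b#R) * yac)
      * (xc * rel_sign (a#b#R) (a#b#R) * yac) * (xc * rel_sign (a#b#R) (b#a#R) * ybc)
      * (xb * rel_sign (a#c#R) (c#a#R) * ybc) * (xb * rel_sign (a#c#R) (a#c#R) * yab)"
    by (simp only: hexagon_cycle_sign_eq_incidence_signs[OF assms(1)])
  also have "\<dots> = - ((xa*xa) * (xb*xb) * (xc*xc) * (yab*yab) * (yac*yac) * (ybc*ybc))"
    using assms(1) by (simp add: rel_sign_refl rel_sign_swap)
  also have "\<dots> = -1"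
    by (simp add: xa_def xb_def xc_def yab_def yac_def ybc_def rel_sign_square)
  finally show ?thesis .
qed

lemma obtain_distinct_prefix:
  assumes "finite S" "i + 3 \<le> card S"
  obtains a b c R where "distinct (a#b#c#R)" "length R = i" "set (a#b#c#R) \<subseteq> S"
proof -
  obtain xs where xs: "distinct xs" "set xs = S" using finite_distinct_list[OF assms(1)] by blast
  define W where "W = take (i + 3) xs"
  have "length W = Suc (Suc (Suc i))"
    using assms(2) xs by (simp add: W_def distinct_card[symmetric])
  then obtain a b c R where "W = a#b#c#R" "length R = i" by (auto simp: length_Suc_conv)
  moreover have "distinct W" "set W \<subseteq> S"
    using xs set_take_subset[of "i + 3" xs] by (simp_all add: W_def)
  ultimately show thesis using that by simp
qed

theorem not_B_balanced_if_simplex: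
  assumes "finite S" "i + 3 \<le> card S" "\<And>G. G \<subseteq> S \<Longrightarrow> G \<in> K" "orientation K ori"
  shows "\<not> B_balanced i K ori"
proof -
  obtain a b c R where abc: "distinct (a#b#c#R)" "length R = i" "set (a#b#c#R) \<subseteq> S"
    using obtain_distinct_prefix[OF assms(1,2)] .
  have faces: "set (hexagon a b c R) \<subseteq> K"
    using abc(3) assms(3) by (auto simp: hexagon_def)
  then have "\<And>F. F \<in> set (hexagon a b c R) \<Longrightarrow> distinct (ori F) \<and> set (ori F) = F"
    using assms(4) by (auto simp: orientation_def)
  then have "(\<Prod>j<length (hexagon a b c R). B_sign ori (hexagon a b c R ! j)
           (hexagon a b c R ! ((j + 1) mod length (hexagon a b c R)))) \<noteq> 1"
    using hexagon_sign[OF abc(1)] by simp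
  then show ?thesis
    using hexagon_is_cycle[OF abc(1,2) faces] unfolding B_balanced_def balanced_def by blast
qed

theorem mainTheorem7:
  fixes K1 K2 K :: "'a set set" and k i :: nat and ori :: "'a set \<Rightarrow> 'a list"
  assumes "simplicial_complex K1" and "simplicial_complex K2"
    and "vertices K1 \<inter> vertices K2 = {}"
    and "k \<ge> 2"
    and "is_k_wedge_sum k K1 K2 K"
    and "orientation K ori"
    and "i \<le> k - 2"
  shows "\<not> B_balanced i K ori"
proof -
  from assms(5) obtain s1 s2 f where s2: "s2 \<in> K2" "card s2 = k + 1"
    and K: "K = wedge_sum K1 K2 s1 s2 f" unfolding is_k_wedge_sum_def by blast
  have "finite s2" using assms(2) s2(1) by (auto simp: simplicial_complex_def)
  moreover have "\<And>G. G \<subseteq> s2 \<Longrightarrow> G \<in> K"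
    using assms(2) s2(1) K by (auto simp: simplicial_complex_def wedge_sum_def)
  moreover have "i + 3 \<le> card s2" using s2(2) assms(4,7) by linarith
  ultimately show ?thesis using not_B_balanced_if_simplex assms(6) by blast
qed

end
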